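(* Let $A$ and $B$ be self-adjoint operators in a von Neumann algebra $\mathcal{M}$, and let $\{E_j\}_{j\in\Lambda}$ be a family of projections in $W^*(A)$ such that: (1) $\sum_{j\in\Lambda}E_j=I$ (so the $E_j$ are mutually orthogonal); (2) $C_{E_jBE_k}=C_{E_j}C_{E_k}$ for all $j\neq k$ in $\Lambda$; (3) for each $j\in\Lambda$, the operator $E_j(A+iB)E_j$ is irreducible in the von Neumann algebra $E_j\mathcal{M}E_j$. Then $A+iB$ is irreducible in $\mathcal{M}$.
   Context: For an operator $T$ in a von Neumann algebra $\mathcal{M}$, the central support $C_T$ is the smallest central projection $Z$ of $\mathcal{M}$ with $ZT=T$. For a von Neumann algebra $\mathcal{N}$ with center $\mathcal{Z}(\mathcal{N})$, an operator $T\in\mathcal{N}$ is called irreducible (in $\mathcal{N}$) if $W^*(T)'\cap\mathcal{N}=\mathcal{Z}(\mathcal{N})$, where $W^*(T)$ is the von Neumann algebra generated by $T$. For a projection $E\in\mathcal{M}$, $E\mathcal{M}E$ is regarded as a von Neumann algebra with unit $E$. *)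

theory Defs
  imports "HOL-Analysis.Analysis"
begin

text \<open>A complex Hilbert space: a real Banach space carrying a complex scalar
multiplication compatible with the real one, and a complex inner product
(linear in the second argument) inducing the norm.\<close>

class chilbert = banach +
  fixes cscale :: "complex \<Rightarrow> 'a \<Rightarrow> 'a"
    and cinner :: "'a \<Rightarrow> 'a \<Rightarrow> complex"
  assumes cscale_add_right: "cscale a (x + y) = cscale a x + cscale a y"
    and cscale_add_left: "cscale (a + b) x = cscale a x + cscale b x"
    and cscale_cscale: "cscale a (cscale b x) = cscale (a * b) x"
    and cscale_one: "cscale 1 x = x"
    and scaleR_cscale: "scaleR r x = cscale (complex_of_real r) x"
    and cinner_add_right: "cinner x (y + z) = cinner x y + cinner x z"
    and cinner_cscale_right: "cinner x (cscale a y) = a * cinner x y"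
    and cinner_commute: "cinner y x = cnj (cinner x y)"
    and cinner_self: "cinner x x = complex_of_real ((norm x)\<^sup>2)"

definition bounded_op :: "('a::chilbert \<Rightarrow> 'a) \<Rightarrow> bool" where
  "bounded_op T \<longleftrightarrow> (\<forall>x y. T (x + y) = T x + T y) \<and> (\<forall>c x. T (cscale c x) = cscale c (T x))
      \<and> (\<exists>K. \<forall>x. norm (T x) \<le> K * norm x)"

definition adj :: "('a::chilbert \<Rightarrow> 'a) \<Rightarrow> ('a \<Rightarrow> 'a)" where
  "adj T = (THE S. \<forall>x y. cinner (T x) y = cinner x (S y))"

definition self_adjoint :: "('a::chilbert \<Rightarrow> 'a) \<Rightarrow> bool" where
  "self_adjoint T \<longleftrightarrow> bounded_op T \<and> adj T = T"

definition is_projection :: "('a::chilbert \<Rightarrow> 'a) \<Rightarrow> bool" where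
  "is_projection P \<longleftrightarrow> bounded_op P \<and> P \<circ> P = P \<and> adj P = P"

definition commutant :: "('a::chilbert \<Rightarrow> 'a) set \<Rightarrow> ('a \<Rightarrow> 'a) set" where
  "commutant S = {T. bounded_op T \<and> (\<forall>R\<in>S. T \<circ> R = R \<circ> T)}"

definition von_neumann_algebra :: "('a::chilbert \<Rightarrow> 'a) set \<Rightarrow> bool" where
  "von_neumann_algebra M \<longleftrightarrow> (\<forall>T\<in>M. bounded_op T) \<and> (\<forall>T\<in>M. adj T \<in> M)
      \<and> commutant (commutant M) = M"

definition Wstar :: "('a::chilbert \<Rightarrow> 'a) \<Rightarrow> ('a \<Rightarrow> 'a) set" where
  "Wstar T = \<Inter> {N. von_neumann_algebra N \<and> T \<in> N}"

definition center :: "('a::chilbert \<Rightarrow> 'a) set \<Rightarrow> ('a \<Rightarrow> 'a) set" where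
  "center N = {S\<in>N. \<forall>R\<in>N. S \<circ> R = R \<circ> S}"

definition central_projection :: "('a::chilbert \<Rightarrow> 'a) set \<Rightarrow> ('a \<Rightarrow> 'a) \<Rightarrow> bool" where
  "central_projection M Z \<longleftrightarrow> is_projection Z \<and> Z \<in> center M"

text \<open>Central support C_T: the smallest central projection Z of M with Z T = T
(order of projections: Z \<le> Z' iff Z Z' = Z).\<close>
definition central_support :: "('a::chilbert \<Rightarrow> 'a) set \<Rightarrow> ('a \<Rightarrow> 'a) \<Rightarrow> ('a \<Rightarrow> 'a)" where
  "central_support M T = (THE Z. central_projection M Z \<and> Z \<circ> T = T \<and>
      (\<forall>Z'. central_projection M Z' \<and> Z' \<circ> T = T \<longrightarrow> Z \<circ> Z' = Z))"

definition corner :: "('a::chilbert \<Rightarrow> 'a) \<Rightarrow> ('a \<Rightarrow> 'a) set \<Rightarrow> ('a \<Rightarrow> 'a) set" where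
  "corner E M = {E \<circ> X \<circ> E | X. X \<in> M}"

definition irreducible_in :: "('a::chilbert \<Rightarrow> 'a) set \<Rightarrow> ('a \<Rightarrow> 'a) \<Rightarrow> bool" where
  "irreducible_in N T \<longleftrightarrow> commutant (Wstar T) \<inter> N = center N"

end

theory Submission
  imports Defs
begin

text \<open>Write \<open>X = A + iB\<close> and let \<open>T \<in> M\<close> commute with \<open>W*(X)\<close>. Then \<open>T\<close> commutes with \<open>X\<close>
  and \<open>X*\<close>, hence with \<open>A\<close> and \<open>B\<close>, hence with \<open>W*(A)\<close> and so with every \<open>E\<^sub>j\<close>. Fix
  \<open>S \<in> M\<close>; it suffices that every block \<open>E\<^sub>j (TS - ST) E\<^sub>k\<close> vanishes. Irreducibility of
  \<open>E\<^sub>j X E\<^sub>j\<close> in \<open>E\<^sub>j M E\<^sub>j\<close> makes \<open>E\<^sub>j T E\<^sub>j\<close> central there, which settles \<open>j = k\<close>.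
  For \<open>j \<noteq> k\<close>, the operators \<open>T E\<^sub>j S E\<^sub>k\<close> and \<open>E\<^sub>j S E\<^sub>k T\<close> agree on all vectors
  \<open>S' E\<^sub>j B E\<^sub>k h\<close> with \<open>S' \<in> M\<close> (push \<open>T\<close> through \<open>B\<close> and use the diagonal case for \<open>j\<close>
  and for \<open>k\<close>), hence on their closed span, the range of \<open>C\<^bsub>E\<^sub>j B E\<^sub>k\<^esub> = C\<^bsub>E\<^sub>j\<^esub> C\<^bsub>E\<^sub>k\<^esub>\<close>.
  Precomposing either operator with \<open>C\<^bsub>E\<^sub>j\<^esub> C\<^bsub>E\<^sub>k\<^esub>\<close> does not change it, so they are equal.\<close>

section \<open>Complex inner product geometry\<close>

interpretation cs: vector_space "cscale :: complex \<Rightarrow> 'a::chilbert \<Rightarrow> 'a"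
  by unfold_locales (auto simp: cscale_add_right cscale_add_left cscale_cscale cscale_one)

lemma cscale_minus_one: "cscale (-1) x = - x"
  by (metis cs.scale_minus_left cscale_one)

lemma cinner_add_left: "cinner (x + y) z = cinner x z + cinner y z"
  by (metis cinner_add_right cinner_commute complex_cnj_add)

lemma cinner_cscale_left: "cinner (cscale a x) y = cnj a * cinner x y"
  by (metis cinner_cscale_right cinner_commute complex_cnj_mult)

lemma cinner_zero_right [simp]: "cinner x 0 = 0"
  by (metis add.right_neutral add_cancel_left_right cinner_add_right)

lemma cinner_zero_left [simp]: "cinner 0 x = 0"
  by (metis cinner_commute cinner_zero_right complex_cnj_zero)

lemma cinner_minus_right: "cinner x (- y) = - cinner x y"
  by (metis add.inverse_unique cinner_add_right cinner_zero_right right_minus)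

lemma cinner_minus_left: "cinner (- x) y = - cinner x y"
  by (metis cinner_commute cinner_minus_right complex_cnj_minus)

lemma cinner_diff_right: "cinner x (y - z) = cinner x y - cinner x z"
  by (simp only: diff_conv_add_uminus cinner_add_right cinner_minus_right)

lemma cinner_diff_left: "cinner (x - y) z = cinner x z - cinner y z"
  by (simp only: diff_conv_add_uminus cinner_add_left cinner_minus_left)

lemma norm_square_cinner: "(norm x)\<^sup>2 = Re (cinner x x)"
  by (simp add: cinner_self)

lemma cinner_self_eq_0 [simp]: "cinner x x = 0 \<longleftrightarrow> x = 0"
  by (simp add: cinner_self)

lemma cinner_ext: "(\<And>x. cinner x u = cinner x v) \<Longrightarrow> u = v"
  by (metis cinner_diff_right cinner_self_eq_0 diff_eq_eq diff_self)

lemma norm_cscale: "norm (cscale a x) = cmod a * norm x"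
proof -
  have "cinner (cscale a x) (cscale a x) = (cnj a * a) * cinner x x"
    by (simp add: cinner_cscale_left cinner_cscale_right)
  also have "cnj a * a = complex_of_real ((cmod a)\<^sup>2)"
    by (metis complex_norm_square mult.commute)
  also have "complex_of_real ((cmod a)\<^sup>2) * cinner x x = complex_of_real ((cmod a * norm x)\<^sup>2)"
    by (simp add: cinner_self power_mult_distrib)
  finally have "(norm (cscale a x))\<^sup>2 = (cmod a * norm x)\<^sup>2"
    by (simp add: norm_square_cinner)
  then show ?thesis by (simp add: power2_eq_iff_nonneg)
qed

lemma norm_add_square:
  "(norm (x + y))\<^sup>2 = (norm x)\<^sup>2 + (norm y)\<^sup>2 + 2 * Re (cinner x y)"
proof -
  have "(norm (x + y))\<^sup>2 = Re (cinner x x + cinner x y + (cinner y x + cinner y y))"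
    by (simp add: norm_square_cinner cinner_add_left cinner_add_right)
  then show ?thesis
    by (subst (asm) cinner_commute[of y x]) (simp add: norm_square_cinner)
qed

lemma Re_cinner_le_norm: "Re (cinner x y) \<le> norm x * norm y"
proof -
  have "(norm (x + y))\<^sup>2 \<le> (norm x + norm y)\<^sup>2"
    by (simp add: norm_triangle_ineq power_mono)
  then show ?thesis unfolding norm_add_square by (simp add: power2_sum)
qed

text \<open>Cauchy--Schwarz: rotate \<open>x\<close> by a unit scalar so that \<open>cinner x y\<close> becomes real.\<close>

lemma norm_cinner_le: "cmod (cinner x y) \<le> norm x * norm y"
proof (cases "cinner x y = 0")
  case False
  define c where "c = cinner x y"
  define a where "a = c / complex_of_real (cmod c)"
  have unit: "cmod a = 1" using False by (simp add: a_def c_def norm_divide)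
  have "cnj a * c = complex_of_real (cmod c)"
    using False by (simp add: a_def c_def complex_norm_square[symmetric] mult.commute power2_eq_square)
  then have "cmod c = Re (cinner (cscale a x) y)"
    by (simp add: cinner_cscale_left c_def)
  also have "\<dots> \<le> norm (cscale a x) * norm y" by (rule Re_cinner_le_norm)
  finally show ?thesis by (simp add: norm_cscale unit c_def)
qed simp

lemma parallelogram_law:
  fixes x y :: "'a::chilbert"
  shows "(norm (x + y))\<^sup>2 + (norm (x - y))\<^sup>2 = 2 * (norm x)\<^sup>2 + 2 * (norm y)\<^sup>2"
  using norm_add_square[of x y] norm_add_square[of x "- y"] by (simp add: cinner_minus_right)

lemma norm_diff_cscale_real_square:
  "(norm (u - cscale (complex_of_real t) v))\<^sup>2
     = (norm u)\<^sup>2 + t\<^sup>2 * (norm v)\<^sup>2 - 2 * t * Re (cinner u v)"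
  using norm_add_square[of u "- cscale (complex_of_real t) v"]
  by (simp add: norm_cscale power_mult_distrib cinner_minus_right cinner_cscale_right)


section \<open>Closed subspaces and orthogonal projections\<close>

definition csubspace :: "'a::chilbert set \<Rightarrow> bool" where
  "csubspace V \<longleftrightarrow> 0 \<in> V \<and> (\<forall>x\<in>V. \<forall>y\<in>V. x + y \<in> V) \<and> (\<forall>c. \<forall>x\<in>V. cscale c x \<in> V)"

lemma csubspace_0: "csubspace V \<Longrightarrow> 0 \<in> V"
  by (simp add: csubspace_def)

lemma csubspace_add: "csubspace V \<Longrightarrow> x \<in> V \<Longrightarrow> y \<in> V \<Longrightarrow> x + y \<in> V"
  by (simp add: csubspace_def)

lemma csubspace_cscale: "csubspace V \<Longrightarrow> x \<in> V \<Longrightarrow> cscale c x \<in> V"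
  by (simp add: csubspace_def)

lemma csubspace_diff: "csubspace V \<Longrightarrow> x \<in> V \<Longrightarrow> y \<in> V \<Longrightarrow> x - y \<in> V"
  by (metis csubspace_add csubspace_cscale cscale_minus_one diff_conv_add_uminus)

lemma csubspace_scaleR: "csubspace V \<Longrightarrow> x \<in> V \<Longrightarrow> r *\<^sub>R x \<in> V"
  by (simp add: csubspace_cscale scaleR_cscale)

text \<open>The midpoint of \<open>a\<close> and \<open>b\<close> lies in \<open>K\<close>, so its distance to \<open>x\<close> is at least \<open>d\<close>;
  the rest is the parallelogram law for \<open>x - a\<close> and \<open>x - b\<close>.\<close>

lemma csubspace_distance_parallelogram:
  assumes K: "csubspace K" and d: "\<And>v. v \<in> K \<Longrightarrow> d \<le> norm (x - v)" "0 \<le> d"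
    and ab: "a \<in> K" "b \<in> K"
  shows "(norm (a - b))\<^sup>2 \<le> 2 * (norm (x - a))\<^sup>2 + 2 * (norm (x - b))\<^sup>2 - 4 * d\<^sup>2"
proof -
  define c where "c = (1/2::real) *\<^sub>R (a + b)"
  have "c \<in> K" unfolding c_def using K ab by (intro csubspace_scaleR csubspace_add)
  then have "d\<^sup>2 \<le> (norm (x - c))\<^sup>2" using d by (intro power_mono) auto
  moreover have "(x - a) + (x - b) = (2::real) *\<^sub>R (x - c)"
    by (simp add: c_def algebra_simps scaleR_2)
  then have "(norm ((x - a) + (x - b)))\<^sup>2 = 4 * (norm (x - c))\<^sup>2"
    by (simp add: power_mult_distrib)
  moreover have "(norm (a - b))\<^sup>2 = (norm ((x - a) - (x - b)))\<^sup>2"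
    by (simp add: norm_minus_commute)
  ultimately show ?thesis using parallelogram_law[of "x - a" "x - b"] by linarith
qed

lemma csubspace_minimizing_sequence_Cauchy:
  assumes K: "csubspace K" and d: "\<And>v. v \<in> K \<Longrightarrow> d \<le> norm (x - v)" "0 \<le> d"
    and vs: "\<And>n. vs n \<in> K" "\<And>n. (norm (x - vs n))\<^sup>2 < d\<^sup>2 + inverse (real (Suc n))"
  shows "Cauchy vs"
  unfolding Cauchy_def
proof (intro allI impI)
  fix e :: real assume e: "0 < e"
  have e2: "0 < e\<^sup>2" using e by simp
  obtain N where "4 / e\<^sup>2 < real N" using reals_Archimedean2 by blast
  then have "4 < e\<^sup>2 * real N" using e2 by (simp add: field_simps)
  then have "4 < e\<^sup>2 * real N + e\<^sup>2" using e2 by linarith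
  then have "4 < e\<^sup>2 * real (Suc N)" by (simp add: algebra_simps)
  then have N: "4 * inverse (real (Suc N)) < e\<^sup>2" by (simp add: field_simps)
  show "\<exists>N. \<forall>m\<ge>N. \<forall>n\<ge>N. dist (vs m) (vs n) < e"
  proof (intro exI allI impI)
    fix m n assume mn: "N \<le> m" "N \<le> n"
    have "inverse (real (Suc m)) \<le> inverse (real (Suc N))"
      "inverse (real (Suc n)) \<le> inverse (real (Suc N))"
      using mn by (simp_all add: field_simps)
    then have "(norm (vs m - vs n))\<^sup>2 < e\<^sup>2"
      using csubspace_distance_parallelogram[OF K d vs(1) vs(1), of m n] vs(2)[of m] vs(2)[of n] N
      by linarith
    then have "norm (vs m - vs n) < e"
      using e by (auto intro: power2_less_imp_less)
    then show "dist (vs m) (vs n) < e"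
      by (simp add: dist_norm)
  qed
qed

lemma csubspace_closest_point_exists:
  assumes K: "csubspace K" "closed K"
  shows "\<exists>p\<in>K. \<forall>v\<in>K. norm (x - p) \<le> norm (x - v)"
proof -
  define D where "D = (\<lambda>v. norm (x - v)) ` K"
  define d where "d = Inf D"
  have D: "D \<noteq> {}" "bdd_below D"
    using csubspace_0[OF K(1)] by (auto simp: D_def intro!: bdd_belowI[of _ 0])
  have d_le: "d \<le> norm (x - v)" if "v \<in> K" for v
    unfolding d_def using D that by (auto simp: D_def intro: cInf_lower)
  have d_nonneg: "0 \<le> d"
    unfolding d_def using D by (auto simp: D_def intro: cInf_greatest)
  have "\<exists>v\<in>K. (norm (x - v))\<^sup>2 < d\<^sup>2 + inverse (real (Suc n))" for n
  proof -
    have "d < sqrt (d\<^sup>2 + inverse (real (Suc n)))"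
      using d_nonneg by (intro real_less_rsqrt) simp
    then obtain v where v: "v \<in> K" "norm (x - v) < sqrt (d\<^sup>2 + inverse (real (Suc n)))"
      using cInf_lessD[OF D(1)] unfolding d_def D_def by blast
    then have "(norm (x - v))\<^sup>2 < (sqrt (d\<^sup>2 + inverse (real (Suc n))))\<^sup>2"
      by (intro power_strict_mono) auto
    then show ?thesis using v by auto
  qed
  then obtain vs where vs: "\<And>n. vs n \<in> K" "\<And>n. (norm (x - vs n))\<^sup>2 < d\<^sup>2 + inverse (real (Suc n))"
    by metis
  obtain p where p: "vs \<longlonglongrightarrow> p"
    using csubspace_minimizing_sequence_Cauchy[OF K(1) d_le d_nonneg vs]
    by (metis Cauchy_convergent_iff convergent_def)
  have "(norm (x - p))\<^sup>2 \<le> d\<^sup>2 + 0"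
  proof (rule LIMSEQ_le)
    show "(\<lambda>n. (norm (x - vs n))\<^sup>2) \<longlonglongrightarrow> (norm (x - p))\<^sup>2"
      by (intro tendsto_intros p)
    show "(\<lambda>n. d\<^sup>2 + inverse (real (Suc n))) \<longlonglongrightarrow> d\<^sup>2 + 0"
      by (intro tendsto_intros LIMSEQ_inverse_real_of_nat)
  qed (use vs(2) less_imp_le in blast)
  then have "(norm (x - p))\<^sup>2 \<le> d\<^sup>2" by simp
  then have "norm (x - p) \<le> d"
    using d_nonneg by (rule power2_le_imp_le)
  moreover have "p \<in> K" by (rule closed_sequentially[OF K(2) vs(1) p])
  ultimately show ?thesis using d_le by (blast intro: order.trans[of "norm (x - p)" d])
qed

text \<open>The real quadratic \<open>t \<mapsto> \<parallel>x - p - t v\<parallel>\<^sup>2\<close> is minimal at \<open>t = 0\<close>, so its linear coefficient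
  \<open>Re (cinner (x - p) v)\<close> vanishes; replacing \<open>v\<close> by \<open>\<i> v\<close> kills the imaginary part.\<close>

lemma closest_point_orthogonal:
  assumes K: "csubspace K" and p: "p \<in> K" and min: "\<And>v. v \<in> K \<Longrightarrow> norm (x - p) \<le> norm (x - v)"
    and v: "v \<in> K"
  shows "cinner (x - p) v = 0"
proof -
  have Re0: "Re (cinner (x - p) w) = 0" if w: "w \<in> K" for w
  proof (cases "w = 0")
    case False
    define r where "r = Re (cinner (x - p) w)"
    define n where "n = (norm w)\<^sup>2"
    have n: "0 < n" using False by (simp add: n_def)
    have "p + cscale (complex_of_real (r / n)) w \<in> K"
      using K p w by (intro csubspace_add csubspace_cscale)
    from min[OF this] have "(norm (x - p))\<^sup>2 \<le> (norm ((x - p) - cscale (complex_of_real (r / n)) w))\<^sup>2"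
      by (simp add: algebra_simps power_mono)
    then have "2 * (r / n) * r \<le> (r / n)\<^sup>2 * n"
      unfolding norm_diff_cscale_real_square r_def[symmetric] n_def[symmetric] by simp
    then have "r\<^sup>2 / n \<le> 0"
      using n by (simp add: power2_eq_square)
    then show ?thesis using n by (simp add: r_def divide_le_0_iff)
  qed simp
  show ?thesis
  proof (rule complex_eqI)
    show "Re (cinner (x - p) v) = Re 0" using Re0[OF v] by simp
    show "Im (cinner (x - p) v) = Im 0"
      using Re0[OF csubspace_cscale[OF K v, of \<i>]] by (simp add: cinner_cscale_right)
  qed
qed


section \<open>Bounded operators\<close>

lemma bounded_opI:
  "(\<And>x y. T (x + y) = T x + T y) \<Longrightarrow> (\<And>c x. T (cscale c x) = cscale c (T x))
    \<Longrightarrow> (\<And>x. norm (T x) \<le> K * norm x) \<Longrightarrow> bounded_op T"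
  unfolding bounded_op_def by blast

lemma bounded_op_add: "bounded_op T \<Longrightarrow> T (x + y) = T x + T y"
  by (simp add: bounded_op_def)

lemma bounded_op_cscale: "bounded_op T \<Longrightarrow> T (cscale c x) = cscale c (T x)"
  by (simp add: bounded_op_def)

lemma bounded_op_0: "bounded_op T \<Longrightarrow> T 0 = 0"
  by (metis add.right_neutral add_left_cancel bounded_op_add)

lemma bounded_op_minus: "bounded_op T \<Longrightarrow> T (- x) = - T x"
  by (metis bounded_op_cscale cscale_minus_one)

lemma bounded_op_diff: "bounded_op T \<Longrightarrow> T (x - y) = T x - T y"
  by (metis bounded_op_add bounded_op_minus diff_conv_add_uminus)

lemma bounded_op_nonneg_bound: "bounded_op T \<Longrightarrow> \<exists>K\<ge>0. \<forall>x. norm (T x) \<le> K * norm x"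
  unfolding bounded_op_def
  by (metis (no_types) max.cobounded1 max.cobounded2 mult_right_mono norm_ge_zero order_trans)

lemma bounded_op_bounded_linear: "bounded_op T \<Longrightarrow> bounded_linear T"
  unfolding bounded_op_def
  by (metis bounded_linear_intro mult.commute scaleR_cscale)

lemma bounded_op_continuous_on: "bounded_op T \<Longrightarrow> continuous_on S T"
  by (simp add: bounded_op_bounded_linear linear_continuous_on)

lemma bounded_op_ident: "bounded_op (\<lambda>x. x)"
  by (rule bounded_opI[of _ 1]) auto

lemma bounded_op_compose:
  assumes T: "bounded_op T" and U: "bounded_op U"
  shows "bounded_op (T \<circ> U)"
proof -
  obtain K1 where K1: "K1 \<ge> 0" "\<And>x. norm (T x) \<le> K1 * norm x"
    using bounded_op_nonneg_bound[OF T] by blast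
  obtain K2 where K2: "\<And>x. norm (U x) \<le> K2 * norm x"
    using U by (auto simp: bounded_op_def)
  have "norm (T (U x)) \<le> (K1 * K2) * norm x" for x
    using K1(2)[of "U x"] mult_left_mono[OF K2 K1(1), of x] by (simp add: mult.assoc)
  then show ?thesis
    using T U by (intro bounded_opI[of _ "K1 * K2"]) (simp_all add: bounded_op_add bounded_op_cscale)
qed

lemma bounded_op_add_ops:
  assumes T: "bounded_op T" and U: "bounded_op U"
  shows "bounded_op (\<lambda>x. T x + U x)"
proof -
  obtain K1 where K1: "\<And>x. norm (T x) \<le> K1 * norm x" using T by (auto simp: bounded_op_def)
  obtain K2 where K2: "\<And>x. norm (U x) \<le> K2 * norm x" using U by (auto simp: bounded_op_def)
  have "norm (T x + U x) \<le> (K1 + K2) * norm x" for x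
    using norm_triangle_ineq[of "T x" "U x"] K1[of x] K2[of x] by (simp add: distrib_right)
  then show ?thesis
    using T U by (intro bounded_opI[of _ "K1 + K2"])
      (simp_all add: bounded_op_add bounded_op_cscale cscale_add_right)
qed

lemma bounded_op_cscale_op:
  assumes T: "bounded_op T"
  shows "bounded_op (\<lambda>x. cscale c (T x))"
proof -
  obtain K where K: "\<And>x. norm (T x) \<le> K * norm x" using T by (auto simp: bounded_op_def)
  have "norm (cscale c (T x)) \<le> (cmod c * K) * norm x" for x
    using K[of x] by (simp add: norm_cscale mult.assoc mult_left_mono)
  then show ?thesis
    using T by (intro bounded_opI[of _ "cmod c * K"])
      (simp_all add: bounded_op_add bounded_op_cscale cscale_add_right mult.commute)
qed


section \<open>Adjoints and orthogonal projections\<close>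

lemma adj_eqI:
  assumes "\<And>x y. cinner (T x) y = cinner x (S y)"
  shows "adj T = S"
  unfolding adj_def
proof (rule the_equality)
  fix S' assume "\<forall>x y. cinner (T x) y = cinner x (S' y)"
  then show "S' = S" using assms by (metis cinner_ext ext)
qed (use assms in blast)

definition orth_proj :: "'a::chilbert set \<Rightarrow> 'a \<Rightarrow> 'a" where
  "orth_proj K x = (THE p. p \<in> K \<and> (\<forall>v\<in>K. cinner (x - p) v = 0))"

lemma orth_proj_unique:
  assumes K: "csubspace K" and pq: "p \<in> K" "q \<in> K"
    and "\<forall>v\<in>K. cinner (x - p) v = 0" "\<forall>v\<in>K. cinner (x - q) v = 0"
  shows "p = q"
proof -
  have "cinner ((x - q) - (x - p)) (p - q) = 0"
    using assms csubspace_diff[OF K pq] by (simp add: cinner_diff_left)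
  then show ?thesis by simp
qed

lemma orth_proj_eqI:
  assumes K: "csubspace K" "closed K" and p: "p \<in> K" "\<forall>v\<in>K. cinner (x - p) v = 0"
  shows "orth_proj K x = p"
  unfolding orth_proj_def
  by (rule the_equality) (use p orth_proj_unique[OF K(1)] in blast)+

lemma orth_proj:
  assumes K: "csubspace K" "closed K"
  shows "orth_proj K x \<in> K" "\<And>v. v \<in> K \<Longrightarrow> cinner (x - orth_proj K x) v = 0"
proof -
  obtain p where p: "p \<in> K" "\<forall>v\<in>K. norm (x - p) \<le> norm (x - v)"
    using csubspace_closest_point_exists[OF K] by blast
  then have "\<forall>v\<in>K. cinner (x - p) v = 0"
    using closest_point_orthogonal[OF K(1)] by blast
  then have "orth_proj K x = p" using orth_proj_eqI[OF K] p(1) by blast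
  then show "orth_proj K x \<in> K" "\<And>v. v \<in> K \<Longrightarrow> cinner (x - orth_proj K x) v = 0"
    using p(1) \<open>\<forall>v\<in>K. cinner (x - p) v = 0\<close> by auto
qed

lemma orth_proj_id: "csubspace K \<Longrightarrow> closed K \<Longrightarrow> v \<in> K \<Longrightarrow> orth_proj K v = v"
  by (rule orth_proj_eqI) auto

lemma orth_proj_idem: "csubspace K \<Longrightarrow> closed K \<Longrightarrow> orth_proj K \<circ> orth_proj K = orth_proj K"
  by (rule ext) (simp add: orth_proj_id orth_proj)

lemma cinner_orth_proj:
  assumes K: "csubspace K" "closed K"
  shows "cinner (orth_proj K x) y = cinner x (orth_proj K y)"
proof -
  have "cinner (x - orth_proj K x) (orth_proj K y) = 0" "cinner (y - orth_proj K y) (orth_proj K x) = 0"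
    using orth_proj[OF K] by blast+
  then show ?thesis
    by (metis cinner_commute cinner_diff_left cinner_diff_right complex_cnj_zero eq_iff_diff_eq_0)
qed

lemma bounded_op_orth_proj:
  assumes K: "csubspace K" "closed K"
  shows "bounded_op (orth_proj K)"
proof (rule bounded_opI)
  show "orth_proj K (x + y) = orth_proj K x + orth_proj K y" for x y
  proof (rule orth_proj_eqI[OF K])
    show "orth_proj K x + orth_proj K y \<in> K" using K by (intro csubspace_add orth_proj)
    have "x + y - (orth_proj K x + orth_proj K y) = (x - orth_proj K x) + (y - orth_proj K y)"
      by simp
    then show "\<forall>v\<in>K. cinner (x + y - (orth_proj K x + orth_proj K y)) v = 0"
      by (simp only:) (simp add: cinner_add_left orth_proj(2)[OF K])
  qed
  show "orth_proj K (cscale c x) = cscale c (orth_proj K x)" for c x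
  proof (rule orth_proj_eqI[OF K])
    show "cscale c (orth_proj K x) \<in> K" using K by (intro csubspace_cscale orth_proj)
    have "cscale c x - cscale c (orth_proj K x) = cscale c (x - orth_proj K x)"
      by (simp add: cs.scale_right_diff_distrib)
    then show "\<forall>v\<in>K. cinner (cscale c x - cscale c (orth_proj K x)) v = 0"
      by (simp add: cinner_cscale_left orth_proj(2)[OF K])
  qed
  show "norm (orth_proj K x) \<le> 1 * norm x" for x
  proof -
    have "(norm (orth_proj K x))\<^sup>2 = Re (cinner x (orth_proj K x))"
      using cinner_orth_proj[OF K, of x "orth_proj K x"]
      by (simp add: norm_square_cinner orth_proj_id[OF K] orth_proj(1)[OF K])
    also have "\<dots> \<le> norm x * norm (orth_proj K x)" by (rule Re_cinner_le_norm)
    finally show ?thesis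
      by (cases "orth_proj K x = 0") (auto simp: power2_eq_square mult_le_cancel_right)
  qed
qed

lemma is_projection_orth_proj: "csubspace K \<Longrightarrow> closed K \<Longrightarrow> is_projection (orth_proj K)"
  unfolding is_projection_def
  by (simp add: bounded_op_orth_proj orth_proj_idem adj_eqI cinner_orth_proj)

lemma riesz_representation:
  fixes f :: "'a::chilbert \<Rightarrow> complex"
  assumes add: "\<And>x y. f (x + y) = f x + f y" and scale: "\<And>c x. f (cscale c x) = c * f x"
    and bound: "\<And>x. cmod (f x) \<le> K * norm x"
  shows "\<exists>w. \<forall>x. f x = cinner w x"
proof (cases "\<forall>x. f x = 0")
  case False
  then obtain x0 where x0: "f x0 \<noteq> 0" by blast
  have "bounded_linear f"
    by (rule bounded_linear_intro[of _ K])
      (simp_all add: add scaleR_cscale scale scaleR_conv_of_real bound mult.commute)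
  then have N: "csubspace {x. f x = 0}" "closed {x. f x = 0}"
    using add scale add[of 0 0]
    by (auto simp: csubspace_def intro!: closed_Collect_eq linear_continuous_on)
  define z where "z = x0 - orth_proj {x. f x = 0} x0"
  have fz: "f z = f x0"
    using orth_proj(1)[OF N, of x0] add[of z "orth_proj {x. f x = 0} x0"] by (simp add: z_def)
  have z_perp: "cinner z v = 0" if "f v = 0" for v
    using orth_proj(2)[OF N, of v x0] that by (simp add: z_def)
  have zz: "cinner z z \<noteq> 0" using fz x0 add[of 0 0] by auto
  have "f x = cinner (cscale (cnj (f z / cinner z z)) z) x" for x
  proof -
    define u where "u = x - cscale (f x / f z) z"
    have "x = u + cscale (f x / f z) z" by (simp add: u_def)
    then have "f x = f u + (f x / f z) * f z" using add scale by metis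
    then have "f u = 0" using fz x0 by simp
    then have "cinner z u = 0" by (rule z_perp)
    then have "cinner z x = (f x / f z) * cinner z z"
      by (simp add: u_def cinner_diff_right cinner_cscale_right)
    then show ?thesis using zz fz x0 by (simp add: cinner_cscale_left field_simps)
  qed
  then show ?thesis by blast
qed (metis cinner_zero_left)

lemma adj_exists:
  assumes T: "bounded_op T"
  shows "\<exists>S. \<forall>x y. cinner (T x) y = cinner x (S y)"
proof -
  obtain K where K: "K \<ge> 0" "\<And>x. norm (T x) \<le> K * norm x"
    using bounded_op_nonneg_bound[OF T] by blast
  have "\<exists>w. \<forall>x. cinner y (T x) = cinner w x" for y
  proof (rule riesz_representation[of _ "norm y * K"])
    show "cmod (cinner y (T x)) \<le> norm y * K * norm x" for x
      using norm_cinner_le[of y "T x"] mult_left_mono[OF K(2)[of x] norm_ge_zero[of y]]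
      by (simp add: mult.assoc)
  qed (simp_all add: bounded_op_add[OF T] bounded_op_cscale[OF T] cinner_add_right cinner_cscale_right)
  then have "\<forall>y. \<exists>w. \<forall>x. cinner (T x) y = cinner x w"
    by (metis cinner_commute)
  then show ?thesis by metis
qed

lemma cinner_adj_right: "bounded_op T \<Longrightarrow> cinner (T x) y = cinner x (adj T y)"
  using adj_exists adj_eqI by metis

lemma cinner_adj_left: "bounded_op T \<Longrightarrow> cinner (adj T x) y = cinner x (T y)"
  by (metis cinner_adj_right cinner_commute)

lemma self_adjoint_cinner: "self_adjoint T \<Longrightarrow> cinner (T x) y = cinner x (T y)"
  unfolding self_adjoint_def by (metis cinner_adj_right)

lemma bounded_op_adj:
  assumes T: "bounded_op T"
  shows "bounded_op (adj T)"
proof -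
  obtain K where K: "K \<ge> 0" "\<And>x. norm (T x) \<le> K * norm x"
    using bounded_op_nonneg_bound[OF T] by blast
  show ?thesis
  proof (rule bounded_opI)
    show "adj T (y + z) = adj T y + adj T z" for y z
      by (rule cinner_ext) (simp add: cinner_adj_right[OF T, symmetric] cinner_add_right)
    show "adj T (cscale c y) = cscale c (adj T y)" for c y
      by (rule cinner_ext) (simp add: cinner_adj_right[OF T, symmetric] cinner_cscale_right)
    show "norm (adj T y) \<le> K * norm y" for y
    proof -
      have "(norm (adj T y))\<^sup>2 = Re (cinner (T (adj T y)) y)"
        by (simp add: norm_square_cinner cinner_adj_right[OF T])
      also have "\<dots> \<le> norm (T (adj T y)) * norm y" by (rule Re_cinner_le_norm)
      also have "\<dots> \<le> (K * norm (adj T y)) * norm y" using K by (simp add: mult_right_mono)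
      finally show ?thesis using K
        by (cases "adj T y = 0") (auto simp: power2_eq_square mult_ac mult_le_cancel_left)
    qed
  qed
qed

lemma adj_adj: "bounded_op T \<Longrightarrow> adj (adj T) = T"
  by (rule adj_eqI) (simp add: cinner_adj_left)

lemma adj_compose: "bounded_op T \<Longrightarrow> bounded_op U \<Longrightarrow> adj (T \<circ> U) = adj U \<circ> adj T"
  by (rule adj_eqI) (simp add: cinner_adj_right)

lemma orth_proj_commute:
  assumes K: "csubspace K" "closed K" and U: "bounded_op U"
    and inv: "\<And>v. v \<in> K \<Longrightarrow> U v \<in> K" "\<And>v. v \<in> K \<Longrightarrow> adj U v \<in> K"
  shows "orth_proj K \<circ> U = U \<circ> orth_proj K"
proof
  fix x
  have "cinner (U x - U (orth_proj K x)) v = 0" if "v \<in> K" for v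
    using orth_proj(2)[OF K inv(2)[OF that]]
    by (simp add: bounded_op_diff[OF U, symmetric] cinner_adj_right[OF U])
  then show "(orth_proj K \<circ> U) x = (U \<circ> orth_proj K) x"
    using orth_proj_eqI[OF K] inv(1)[OF orth_proj(1)[OF K]] by auto
qed


section \<open>Commutants and von Neumann algebras\<close>

lemma commutantI: "bounded_op T \<Longrightarrow> (\<And>R. R \<in> S \<Longrightarrow> T \<circ> R = R \<circ> T) \<Longrightarrow> T \<in> commutant S"
  by (simp add: commutant_def)

lemma commutant_bounded_op: "T \<in> commutant S \<Longrightarrow> bounded_op T"
  by (simp add: commutant_def)

lemma commutant_commute: "T \<in> commutant S \<Longrightarrow> R \<in> S \<Longrightarrow> T \<circ> R = R \<circ> T"
  by (simp add: commutant_def)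

lemma commutant_antimono: "S \<subseteq> S' \<Longrightarrow> commutant S' \<subseteq> commutant S"
  by (auto simp: commutant_def)

lemma double_commutant_superset: "(\<And>R. R \<in> S \<Longrightarrow> bounded_op R) \<Longrightarrow> S \<subseteq> commutant (commutant S)"
  by (auto simp: commutant_def)

lemma triple_commutant:
  assumes "\<And>R. R \<in> S \<Longrightarrow> bounded_op R"
  shows "commutant (commutant (commutant S)) = commutant S"
proof
  show "commutant (commutant (commutant S)) \<subseteq> commutant S"
    by (intro commutant_antimono double_commutant_superset assms)
  show "commutant S \<subseteq> commutant (commutant (commutant S))"
    by (intro double_commutant_superset commutant_bounded_op)
qed

lemma commutant_adj_closed:
  assumes S: "\<And>R. R \<in> S \<Longrightarrow> bounded_op R \<and> adj R \<in> S" and T: "T \<in> commutant S"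
  shows "adj T \<in> commutant S"
proof (rule commutantI)
  have T_bop: "bounded_op T" using T by (rule commutant_bounded_op)
  then show "bounded_op (adj T)" by (rule bounded_op_adj)
  fix R assume R: "R \<in> S"
  then have R_bop: "bounded_op R" "bounded_op (adj R)" using S bounded_op_adj by blast+
  have "adj T \<circ> R = adj (adj R \<circ> T)"
    using R_bop T_bop by (simp add: adj_compose adj_adj)
  also have "adj R \<circ> T = T \<circ> adj R"
    using commutant_commute[OF T] S[OF R] by simp
  also have "adj (T \<circ> adj R) = R \<circ> adj T"
    using R_bop T_bop by (simp add: adj_compose adj_adj)
  finally show "adj T \<circ> R = R \<circ> adj T" .
qed

lemma von_neumann_algebra_double_commutant:
  assumes S: "\<And>R. R \<in> S \<Longrightarrow> bounded_op R \<and> adj R \<in> S"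
  shows "von_neumann_algebra (commutant (commutant S))"
  unfolding von_neumann_algebra_def
proof (intro conjI ballI)
  have "\<And>R. R \<in> commutant S \<Longrightarrow> bounded_op R \<and> adj R \<in> commutant S"
    using commutant_adj_closed[OF S] commutant_bounded_op by blast
  then show "adj T \<in> commutant (commutant S)" if "T \<in> commutant (commutant S)" for T
    using commutant_adj_closed that by blast
  show "commutant (commutant (commutant (commutant S))) = commutant (commutant S)"
    by (intro triple_commutant commutant_bounded_op)
qed (rule commutant_bounded_op)

lemma von_neumann_algebra_bounded_op: "von_neumann_algebra M \<Longrightarrow> T \<in> M \<Longrightarrow> bounded_op T"
  by (simp add: von_neumann_algebra_def)

lemma von_neumann_algebra_adj: "von_neumann_algebra M \<Longrightarrow> T \<in> M \<Longrightarrow> adj T \<in> M"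
  by (simp add: von_neumann_algebra_def)

lemma von_neumann_algebra_commute:
  "von_neumann_algebra M \<Longrightarrow> Q \<in> commutant M \<Longrightarrow> T \<in> M \<Longrightarrow> Q \<circ> T = T \<circ> Q"
  by (simp add: commutant_def)

lemma von_neumann_algebra_memI:
  assumes "von_neumann_algebra M" "bounded_op X" "\<And>Q. Q \<in> commutant M \<Longrightarrow> Q \<circ> X = X \<circ> Q"
  shows "X \<in> M"
  using assms commutantI[of X "commutant M"] by (simp add: von_neumann_algebra_def)

lemma von_neumann_algebra_ident: "von_neumann_algebra M \<Longrightarrow> (\<lambda>x. x) \<in> M"
  by (rule von_neumann_algebra_memI) (auto simp: bounded_op_ident)

lemma von_neumann_algebra_compose:
  assumes M: "von_neumann_algebra M" and TU: "T \<in> M" "U \<in> M"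
  shows "T \<circ> U \<in> M"
proof (rule von_neumann_algebra_memI[OF M])
  show "bounded_op (T \<circ> U)"
    using M TU by (intro bounded_op_compose von_neumann_algebra_bounded_op)
  fix Q assume "Q \<in> commutant M"
  then show "Q \<circ> (T \<circ> U) = T \<circ> U \<circ> Q"
    using von_neumann_algebra_commute[OF M _ TU(1)] von_neumann_algebra_commute[OF M _ TU(2)]
    by (metis comp_assoc)
qed

lemma von_neumann_algebra_add_cscale:
  assumes M: "von_neumann_algebra M" and TU: "T \<in> M" "U \<in> M"
  shows "(\<lambda>x. T x + cscale c (U x)) \<in> M"
proof (rule von_neumann_algebra_memI[OF M])
  show "bounded_op (\<lambda>x. T x + cscale c (U x))"
    using M TU by (intro bounded_op_add_ops bounded_op_cscale_op von_neumann_algebra_bounded_op)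
  fix Q assume Q: "Q \<in> commutant M"
  have "Q (T x) = T (Q x)" "Q (U x) = U (Q x)" for x
    using comp_eq_dest[OF von_neumann_algebra_commute[OF M Q TU(1)]]
      comp_eq_dest[OF von_neumann_algebra_commute[OF M Q TU(2)]] by blast+
  then show "Q \<circ> (\<lambda>x. T x + cscale c (U x)) = (\<lambda>x. T x + cscale c (U x)) \<circ> Q"
    using commutant_bounded_op[OF Q] by (auto simp: bounded_op_add bounded_op_cscale)
qed

lemma von_neumann_algebra_commutant_adj:
  "von_neumann_algebra M \<Longrightarrow> Q \<in> commutant M \<Longrightarrow> adj Q \<in> commutant M"
  by (rule commutant_adj_closed) (auto simp: von_neumann_algebra_bounded_op von_neumann_algebra_adj)

lemma center_memD: "Z \<in> center M \<Longrightarrow> Z \<in> M"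
  by (simp add: center_def)

lemma center_commute: "Z \<in> center M \<Longrightarrow> S \<in> M \<Longrightarrow> Z \<circ> S = S \<circ> Z"
  by (simp add: center_def)

lemma center_commute_apply: "Z \<in> center M \<Longrightarrow> S \<in> M \<Longrightarrow> S (Z x) = Z (S x)"
  by (metis center_commute comp_apply)

lemma Wstar_least: "von_neumann_algebra N \<Longrightarrow> T \<in> N \<Longrightarrow> Wstar T \<subseteq> N"
  unfolding Wstar_def by blast

lemma Wstar_generator: "T \<in> Wstar T"
  unfolding Wstar_def by blast

lemma adj_in_Wstar: "adj T \<in> Wstar T"
  unfolding Wstar_def von_neumann_algebra_def by blast

text \<open>\<open>W*(T)\<close> is contained in the von Neumann algebra \<open>{T, T*}''\<close>, so \<open>W*(T)' = {T, T*}'\<close>.\<close>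

lemma commutant_Wstar_iff:
  assumes T: "bounded_op T"
  shows "Q \<in> commutant (Wstar T) \<longleftrightarrow> bounded_op Q \<and> Q \<circ> T = T \<circ> Q \<and> Q \<circ> adj T = adj T \<circ> Q"
proof
  assume "Q \<in> commutant (Wstar T)"
  then show "bounded_op Q \<and> Q \<circ> T = T \<circ> Q \<and> Q \<circ> adj T = adj T \<circ> Q"
    using commutant_bounded_op commutant_commute Wstar_generator adj_in_Wstar by blast
next
  assume Q: "bounded_op Q \<and> Q \<circ> T = T \<circ> Q \<and> Q \<circ> adj T = adj T \<circ> Q"
  define S where "S = {T, adj T}"
  have S: "\<And>R. R \<in> S \<Longrightarrow> bounded_op R \<and> adj R \<in> S"
    using T by (auto simp: S_def bounded_op_adj adj_adj)
  have "T \<in> commutant (commutant S)"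
    using double_commutant_superset[of S] S by (auto simp: S_def)
  then have "Wstar T \<subseteq> commutant (commutant S)"
    using von_neumann_algebra_double_commutant[OF S] Wstar_least by blast
  moreover have "Q \<in> commutant (commutant (commutant S))"
    using Q triple_commutant[of S] S by (auto simp: S_def commutant_def)
  ultimately show "Q \<in> commutant (Wstar T)"
    using commutant_antimono by blast
qed


section \<open>Central supports\<close>

definition closed_cspan :: "'a::chilbert set \<Rightarrow> 'a set" where
  "closed_cspan G = \<Inter> {V. csubspace V \<and> closed V \<and> G \<subseteq> V}"

lemma csubspace_closed_cspan: "csubspace (closed_cspan G)"
  unfolding closed_cspan_def csubspace_def by blast

lemma closed_closed_cspan: "closed (closed_cspan G)"
  unfolding closed_cspan_def by (rule closed_Inter) blast

lemma closed_cspan_superset: "G \<subseteq> closed_cspan G"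
  unfolding closed_cspan_def by blast

lemma closed_cspan_minimal: "csubspace V \<Longrightarrow> closed V \<Longrightarrow> G \<subseteq> V \<Longrightarrow> closed_cspan G \<subseteq> V"
  unfolding closed_cspan_def by blast

lemma closed_cspan_invariant:
  assumes U: "bounded_op U" and G: "\<And>g. g \<in> G \<Longrightarrow> U g \<in> closed_cspan G"
    and v: "v \<in> closed_cspan G"
  shows "U v \<in> closed_cspan G"
proof -
  have "closed_cspan G \<subseteq> U -` closed_cspan G"
  proof (rule closed_cspan_minimal)
    show "csubspace (U -` closed_cspan G)"
      using csubspace_closed_cspan[of G]
      by (auto simp: csubspace_def bounded_op_0[OF U] bounded_op_add[OF U] bounded_op_cscale[OF U])
    show "closed (U -` closed_cspan G)"
      by (rule closed_vimage[OF closed_closed_cspan bounded_op_continuous_on[OF U]])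
  qed (use G in auto)
  then show ?thesis using v by auto
qed

lemma bounded_op_eq_on_closed_cspan:
  assumes U: "bounded_op U" and V: "bounded_op V" and G: "\<And>g. g \<in> G \<Longrightarrow> U g = V g"
    and v: "v \<in> closed_cspan G"
  shows "U v = V v"
proof -
  have "closed_cspan G \<subseteq> {x. U x = V x}"
  proof (rule closed_cspan_minimal)
    show "csubspace {x. U x = V x}"
      by (auto simp: csubspace_def bounded_op_0[OF U] bounded_op_add[OF U] bounded_op_cscale[OF U]
          bounded_op_0[OF V] bounded_op_add[OF V] bounded_op_cscale[OF V])
    show "closed {x. U x = V x}"
      by (rule closed_Collect_eq[OF bounded_op_continuous_on[OF U] bounded_op_continuous_on[OF V]])
  qed (use G in auto)
  then show ?thesis using v by auto
qed

text \<open>The subspace \<open>[M R H]\<close>, whose projection is the central support \<open>C\<^sub>R\<close>.\<close>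

definition range_span :: "('a::chilbert \<Rightarrow> 'a) set \<Rightarrow> ('a \<Rightarrow> 'a) \<Rightarrow> 'a set" where
  "range_span M R = closed_cspan {S (R y) | S y. S \<in> M}"

lemma range_span_subspace: "csubspace (range_span M R)" "closed (range_span M R)"
  by (simp_all add: range_span_def csubspace_closed_cspan closed_closed_cspan)

lemma range_span_generator: "S \<in> M \<Longrightarrow> S (R y) \<in> range_span M R"
  unfolding range_span_def
  by (rule subsetD[OF closed_cspan_superset], unfold mem_Collect_eq)
    (rule exI[of _ S], rule exI[of _ y], simp)

lemma range_span_range:
  assumes "von_neumann_algebra M"
  shows "R y \<in> range_span M R"
  using range_span_generator[OF von_neumann_algebra_ident[OF assms]] by simp

lemma bounded_op_eq_on_range_span:
  assumes L: "bounded_op L1" "bounded_op L2"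
    and gen: "\<And>S z. S \<in> M \<Longrightarrow> L1 (S (R z)) = L2 (S (R z))" and v: "v \<in> range_span M R"
  shows "L1 v = L2 v"
  using v unfolding range_span_def
  by (rule bounded_op_eq_on_closed_cspan[OF L, rotated]) (use gen in blast)

lemma range_span_invariant:
  assumes M: "von_neumann_algebra M" and R: "R \<in> M" and v: "v \<in> range_span M R"
    and U: "U \<in> M \<or> U \<in> commutant M"
  shows "U v \<in> range_span M R"
  unfolding range_span_def
proof (rule closed_cspan_invariant[OF _ _ v[unfolded range_span_def]])
  show "bounded_op U"
    using U M von_neumann_algebra_bounded_op commutant_bounded_op by blast
  fix g assume "g \<in> {S (R y) | S y. S \<in> M}"
  then obtain S y where g: "g = S (R y)" "S \<in> M" by blast
  show "U g \<in> closed_cspan {S (R y) | S y. S \<in> M}"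
  proof (cases "U \<in> M")
    case True
    have "U g = (U \<circ> S) (R y)" using g(1) by simp
    then show ?thesis
      using range_span_generator[OF von_neumann_algebra_compose[OF M True g(2)]]
      by (simp add: range_span_def)
  next
    case False
    then have comm: "U \<circ> S = S \<circ> U" "U \<circ> R = R \<circ> U"
      using U von_neumann_algebra_commute[OF M _ g(2)] von_neumann_algebra_commute[OF M _ R] by auto
    have "U g = S (R (U y))"
      using g(1) fun_cong[OF comm(1), of "R y"] fun_cong[OF comm(2), of y] by simp
    then show ?thesis
      using range_span_generator[OF g(2)] by (simp add: range_span_def)
  qed
qed

lemma orth_proj_range_span_comp: "von_neumann_algebra M \<Longrightarrow> orth_proj (range_span M R) \<circ> R = R"
  by (rule ext) (simp add: orth_proj_id[OF range_span_subspace range_span_range])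

lemma central_projection_orth_proj_range_span:
  assumes M: "von_neumann_algebra M" and R: "R \<in> M"
  shows "central_projection M (orth_proj (range_span M R))"
proof -
  let ?P = "orth_proj (range_span M R)"
  have commute: "?P \<circ> U = U \<circ> ?P" if U: "U \<in> M \<or> U \<in> commutant M" for U
  proof (rule orth_proj_commute[OF range_span_subspace])
    show "bounded_op U"
      using U M von_neumann_algebra_bounded_op commutant_bounded_op by blast
    have "adj U \<in> M \<or> adj U \<in> commutant M"
      using U M von_neumann_algebra_adj von_neumann_algebra_commutant_adj by blast
    then show "adj U v \<in> range_span M R" if "v \<in> range_span M R" for v
      using range_span_invariant[OF M R that] by blast
  qed (rule range_span_invariant[OF M R _ U])
  have P_proj: "is_projection ?P"
    by (rule is_projection_orth_proj[OF range_span_subspace])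
  have "?P \<in> M"
  proof (rule von_neumann_algebra_memI[OF M])
    show "bounded_op ?P" using P_proj by (simp add: is_projection_def)
    fix Q assume "Q \<in> commutant M"
    then show "Q \<circ> ?P = ?P \<circ> Q" using commute[of Q] by simp
  qed
  then show ?thesis
    unfolding central_projection_def center_def using P_proj commute by blast
qed

lemma central_support_eq_orth_proj:
  assumes M: "von_neumann_algebra M" and R: "R \<in> M"
  shows "central_support M R = orth_proj (range_span M R)"
proof -
  let ?P = "orth_proj (range_span M R)"
  have P_central: "central_projection M ?P"
    by (rule central_projection_orth_proj_range_span[OF M R])
  have PR: "?P \<circ> R = R"
    by (rule orth_proj_range_span_comp[OF M])
  have P_M: "?P \<in> M"
    using P_central center_memD unfolding central_projection_def by blast
  have P_least: "?P \<circ> Z = ?P" if Z: "central_projection M Z" "Z \<circ> R = R" for Z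
  proof -
    have Z_bop: "bounded_op Z" and Z_center: "Z \<in> center M"
      using Z(1) by (auto simp: central_projection_def is_projection_def)
    have Z_fix: "Z v = v" if "v \<in> range_span M R" for v
    proof (rule bounded_op_eq_on_range_span[OF Z_bop bounded_op_ident _ that])
      fix S y assume "S \<in> M"
      then show "Z (S (R y)) = S (R y)"
        using center_commute_apply[OF Z_center, of S "R y"] fun_cong[OF Z(2), of y] by simp
    qed
    have "?P \<circ> Z = Z \<circ> ?P" by (rule center_commute[OF Z_center P_M, symmetric])
    also have "\<dots> = ?P"
      using Z_fix[OF orth_proj(1)[OF range_span_subspace]] by (simp add: fun_eq_iff)
    finally show ?thesis .
  qed
  show ?thesis
    unfolding central_support_def
  proof (rule the_equality)
    fix Z assume "central_projection M Z \<and> Z \<circ> R = R \<and>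
      (\<forall>Z'. central_projection M Z' \<and> Z' \<circ> R = R \<longrightarrow> Z \<circ> Z' = Z)"
    then have Z: "central_projection M Z" "Z \<circ> R = R" and "Z \<circ> ?P = Z"
      using P_central PR by blast+
    then have "Z = Z \<circ> ?P" by simp
    also have "\<dots> = ?P \<circ> Z"
      using Z(1) unfolding central_projection_def by (blast intro: center_commute[OF _ P_M])
    also have "\<dots> = ?P" by (rule P_least[OF Z])
    finally show "Z = ?P" .
  qed (use P_central PR P_least in blast)
qed

lemma central_support:
  assumes M: "von_neumann_algebra M" and R: "R \<in> M"
  shows "central_support M R \<in> center M" "central_support M R \<circ> R = R"
  using central_projection_orth_proj_range_span[OF M R] orth_proj_range_span_comp[OF M]
  by (simp_all add: central_support_eq_orth_proj[OF M R] central_projection_def)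

lemma central_support_eq_on_generators:
  assumes M: "von_neumann_algebra M" and R: "R \<in> M" and L: "bounded_op L1" "bounded_op L2"
    and gen: "\<And>S z. S \<in> M \<Longrightarrow> L1 (S (R z)) = L2 (S (R z))"
  shows "L1 (central_support M R x) = L2 (central_support M R x)"
  unfolding central_support_eq_orth_proj[OF M R]
  by (rule bounded_op_eq_on_range_span[OF L gen orth_proj(1)[OF range_span_subspace]])


section \<open>Irreducibility from a block decomposition\<close>

lemma bounded_op_eq_from_blocks:
  assumes U: "bounded_op U" and V: "bounded_op V"
    and sum: "\<And>x. ((\<lambda>j. E j x) has_sum x) \<Lambda>"
    and blocks: "\<And>j k. j \<in> \<Lambda> \<Longrightarrow> k \<in> \<Lambda> \<Longrightarrow> E j \<circ> U \<circ> E k = E j \<circ> V \<circ> E k"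
  shows "U = V"
proof
  fix x
  have column: "U (E k x) = V (E k x)" if k: "k \<in> \<Lambda>" for k
  proof -
    have block: "E j (U (E k x)) = E j (V (E k x))" if "j \<in> \<Lambda>" for j
      using comp_eq_dest[OF blocks[OF that k]] by simp
    have "((\<lambda>j. E j (U (E k x))) has_sum V (E k x)) \<Lambda>"
      using sum by (rule has_sum_cong[THEN iffD2, rotated]) (simp add: block)
    with sum show ?thesis by (rule has_sum_unique)
  qed
  have "((\<lambda>k. U (E k x)) has_sum V x) \<Lambda>"
    using has_sum_bounded_linear[OF bounded_op_bounded_linear[OF V] sum]
    by (rule has_sum_cong[THEN iffD2, rotated]) (simp add: column)
  with has_sum_bounded_linear[OF bounded_op_bounded_linear[OF U] sum]
  show "U x = V x" by (rule has_sum_unique)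
qed

lemma irreducible_inI:
  assumes M: "von_neumann_algebra M" and X: "X \<in> M"
    and commute: "\<And>T S. T \<in> commutant (Wstar X) \<Longrightarrow> T \<in> M \<Longrightarrow> S \<in> M \<Longrightarrow> T \<circ> S = S \<circ> T"
  shows "irreducible_in M X"
  unfolding irreducible_in_def
proof
  show "commutant (Wstar X) \<inter> M \<subseteq> center M"
    using commute by (auto simp: center_def)
  show "center M \<subseteq> commutant (Wstar X) \<inter> M"
  proof
    fix Z assume Z: "Z \<in> center M"
    then have "Z \<in> M" by (rule center_memD)
    moreover have "Z \<circ> R = R \<circ> Z" if "R \<in> Wstar X" for R
      using center_commute[OF Z] Wstar_least[OF M X] that by blast
    ultimately show "Z \<in> commutant (Wstar X) \<inter> M"
      by (blast intro: commutantI von_neumann_algebra_bounded_op[OF M])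
  qed
qed

lemma comp_central_support:
  assumes M: "von_neumann_algebra M" and R: "R \<in> M"
  shows "R \<circ> central_support M R = R"
  using center_commute[OF central_support(1)[OF M R] R] central_support(2)[OF M R] by simp

lemma adj_cartesian:
  assumes "self_adjoint A" "self_adjoint B"
  shows "adj (\<lambda>x. A x + cscale \<i> (B x)) = (\<lambda>x. A x + cscale (- \<i>) (B x))"
  by (rule adj_eqI)
    (simp add: cinner_add_left cinner_add_right cinner_cscale_left cinner_cscale_right
      cinner_diff_right self_adjoint_cinner[OF assms(1)] self_adjoint_cinner[OF assms(2)])

text \<open>\<open>A\<close> and \<open>B\<close> are recovered from \<open>X = A + iB\<close> and \<open>X* = A - iB\<close> as \<open>(X + X*)/2\<close>
  and \<open>(X - X*)/2i\<close>.\<close>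

lemma commutant_Wstar_cartesian:
  assumes A: "self_adjoint A" and B: "self_adjoint B"
    and T: "T \<in> commutant (Wstar (\<lambda>x. A x + cscale \<i> (B x)))"
  shows "T \<circ> A = A \<circ> T" "T \<circ> B = B \<circ> T"
proof -
  define X where "X = (\<lambda>x. A x + cscale \<i> (B x))"
  define X' where "X' = (\<lambda>x. A x + cscale (- \<i>) (B x))"
  have "bounded_op X"
    using A B unfolding X_def self_adjoint_def by (intro bounded_op_add_ops bounded_op_cscale_op) auto
  moreover have "adj X = X'"
    unfolding X_def X'_def by (rule adj_cartesian[OF A B])
  ultimately have T_bop: "bounded_op T" and TX_comm: "T \<circ> X = X \<circ> T" "T \<circ> X' = X' \<circ> T"
    using T commutant_Wstar_iff[of X T] by (simp_all add: X_def)
  have TX: "T (X x) = X (T x)" and TX': "T (X' x) = X' (T x)" for x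
    using comp_eq_dest[OF TX_comm(1)] comp_eq_dest[OF TX_comm(2)] .
  have A_eq: "A y = cscale (1/2) (X y + X' y)" for y
  proof -
    have "X y + X' y = A y + A y + (cscale \<i> (B y) + cscale (- \<i>) (B y))"
      by (simp add: X_def X'_def algebra_simps)
    also have "cscale \<i> (B y) + cscale (- \<i>) (B y) = 0"
      by (simp add: cscale_add_left[symmetric])
    finally have "cscale (1/2) (X y + X' y) = cscale (1/2 + 1/2) (A y)"
      by (simp only: add_0_right cscale_add_left cscale_add_right)
    then show ?thesis by simp
  qed
  have B_eq: "B y = cscale (- \<i> / 2) (X y - X' y)" for y
  proof -
    have "X y - X' y = cscale \<i> (B y) + cscale \<i> (B y)"
      by (simp add: X_def X'_def)
    also have "\<dots> = cscale (2 * \<i>) (B y)"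
      by (simp only: mult_2 cscale_add_left)
    finally have "cscale (- \<i> / 2) (X y - X' y) = cscale ((- \<i> / 2) * (2 * \<i>)) (B y)"
      by simp
    also have "(- \<i> / 2) * (2 * \<i>) = 1" by (simp add: field_simps)
    finally show ?thesis by simp
  qed
  show "T \<circ> A = A \<circ> T"
    by (rule ext) (simp add: A_eq bounded_op_add[OF T_bop] bounded_op_cscale[OF T_bop] TX TX')
  show "T \<circ> B = B \<circ> T"
    by (rule ext)
      (simp add: B_eq bounded_op_minus[OF T_bop] bounded_op_diff[OF T_bop] bounded_op_cscale[OF T_bop] TX TX')
qed

lemma commutant_Wstar_self_adjoint:
  "self_adjoint A \<Longrightarrow> bounded_op T \<Longrightarrow> T \<circ> A = A \<circ> T \<Longrightarrow> T \<in> commutant (Wstar A)"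
  by (simp add: commutant_Wstar_iff self_adjoint_def)

text \<open>By irreducibility, the compression \<open>E T E\<close> is central in \<open>E M E\<close>.\<close>

lemma irreducible_corner_compression:
  assumes M: "von_neumann_algebra M" and E: "is_projection E" "E \<in> M" and X: "X \<in> M"
    and T: "T \<in> M" "T \<in> commutant (Wstar X)" "T \<circ> E = E \<circ> T"
    and irr: "irreducible_in (corner E M) (E \<circ> X \<circ> E)" and W: "W \<in> M"
  shows "E \<circ> T \<circ> W \<circ> E = E \<circ> W \<circ> T \<circ> E"
proof -
  have X_bop: "bounded_op X" and E_bop: "bounded_op E" and E_adj: "adj E = E"
    using M X E by (auto simp: von_neumann_algebra_bounded_op is_projection_def)
  have EE: "E (E x) = E x" for x
    using E(1) unfolding is_projection_def by (metis comp_apply)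
  have TE: "T (E x) = E (T x)" for x
    using comp_eq_dest[OF T(3)] .
  have TX_comm: "T \<circ> X = X \<circ> T" "T \<circ> adj X = adj X \<circ> T"
    using T(2) unfolding commutant_Wstar_iff[OF X_bop] by simp_all
  have TX: "T (X x) = X (T x)" and TX': "T (adj X x) = adj X (T x)" for x
    using comp_eq_dest[OF TX_comm(1)] comp_eq_dest[OF TX_comm(2)] .
  let ?Y = "E \<circ> X \<circ> E" and ?Q = "E \<circ> T \<circ> E"
  have Y_bop: "bounded_op ?Y" and Q_bop: "bounded_op ?Q"
    using M T(1) X_bop E_bop by (simp_all add: bounded_op_compose von_neumann_algebra_bounded_op)
  have "adj ?Y = E \<circ> adj X \<circ> E"
    using X_bop E_bop E_adj by (simp add: adj_compose bounded_op_compose comp_assoc)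
  then have "?Q \<in> commutant (Wstar ?Y)"
    using Y_bop Q_bop by (simp add: commutant_Wstar_iff fun_eq_iff EE TE TX TX')
  moreover have "?Q \<in> corner E M"
    using T(1) unfolding corner_def by blast
  ultimately have "?Q \<in> center (corner E M)"
    using irr unfolding irreducible_in_def by blast
  moreover have "E \<circ> W \<circ> E \<in> corner E M"
    using W unfolding corner_def by blast
  ultimately have "?Q \<circ> (E \<circ> W \<circ> E) = (E \<circ> W \<circ> E) \<circ> ?Q"
    by (rule center_commute)
  then show ?thesis by (simp add: fun_eq_iff EE TE)
qed

text \<open>The off-diagonal blocks: the two sides agree on \<open>[M (E B F) H]\<close>, hence after composing with
  \<open>C\<^bsub>E B F\<^esub> = C\<^sub>E C\<^sub>F\<close>, and composing with \<open>C\<^sub>E C\<^sub>F\<close> changes neither side.\<close>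

lemma offdiagonal_block_commute:
  assumes M: "von_neumann_algebra M" and in_M: "S \<in> M" "T \<in> M" "B \<in> M" "E \<in> M" "F \<in> M"
    and TE: "T \<circ> E = E \<circ> T" and TF: "T \<circ> F = F \<circ> T" and TB: "T \<circ> B = B \<circ> T"
    and diagE: "\<And>W. W \<in> M \<Longrightarrow> E \<circ> T \<circ> W \<circ> E = E \<circ> W \<circ> T \<circ> E"
    and diagF: "\<And>W. W \<in> M \<Longrightarrow> F \<circ> T \<circ> W \<circ> F = F \<circ> W \<circ> T \<circ> F"
    and cs: "central_support M (E \<circ> B \<circ> F) = central_support M E \<circ> central_support M F"
  shows "E \<circ> (T \<circ> S) \<circ> F = E \<circ> (S \<circ> T) \<circ> F"
proof -
  define CE where "CE = central_support M E"
  define CF where "CF = central_support M F"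
  have CE: "CE \<in> center M" and CF: "CF \<in> center M"
    using central_support(1)[OF M] in_M unfolding CE_def CF_def by auto
  have bops: "bounded_op S" "bounded_op T" "bounded_op E" "bounded_op F"
    using in_M von_neumann_algebra_bounded_op[OF M] by auto
  have TE': "T (E y) = E (T y)" and TF': "T (F y) = F (T y)" and TB': "T (B y) = B (T y)" for y
    using comp_eq_dest[OF TE] comp_eq_dest[OF TF] comp_eq_dest[OF TB] .
  let ?L1 = "T \<circ> E \<circ> S \<circ> F" and ?L2 = "E \<circ> S \<circ> F \<circ> T"
  have "?L1 (central_support M (E \<circ> B \<circ> F) x) = ?L2 (central_support M (E \<circ> B \<circ> F) x)" for x
  proof (rule central_support_eq_on_generators[OF M])
    show "E \<circ> B \<circ> F \<in> M" by (simp add: von_neumann_algebra_compose M in_M)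
    show "bounded_op ?L1" "bounded_op ?L2" using bops by (simp_all add: bounded_op_compose)
    fix S' z assume S': "S' \<in> M"
    have W: "S \<circ> F \<circ> S' \<in> M" "S' \<circ> E \<circ> B \<in> M"
      using M in_M S' by (simp_all add: von_neumann_algebra_compose)
    have "?L1 (S' ((E \<circ> B \<circ> F) z)) = E (S (F (S' (E (B (F (T z)))))))"
      using comp_eq_dest[OF diagE[OF W(1)]] by (simp add: TE' TF' TB')
    also have "\<dots> = ?L2 (S' ((E \<circ> B \<circ> F) z))"
      using comp_eq_dest[OF diagF[OF W(2)]] by (simp add: TE' TF' TB')
    finally show "?L1 (S' ((E \<circ> B \<circ> F) z)) = ?L2 (S' ((E \<circ> B \<circ> F) z))" .
  qed
  moreover have "E (CE y) = E y" "F (CF y) = F y" for y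
    using fun_cong[OF comp_central_support[OF M in_M(4)], of y]
      fun_cong[OF comp_central_support[OF M in_M(5)], of y]
    by (simp_all add: CE_def CF_def)
  moreover have "S (CE y) = CE (S y)" "T (CE y) = CE (T y)" "F (CE y) = CE (F y)"
    "T (CF y) = CF (T y)" for y
    using CE CF in_M by (simp_all add: center_commute_apply)
  ultimately show ?thesis
    by (simp add: fun_eq_iff cs CE_def[symmetric] CF_def[symmetric] TE' TF')
qed


theorem mainTheorem7:
  fixes M :: "('h::chilbert \<Rightarrow> 'h) set"
    and A B :: "'h \<Rightarrow> 'h"
    and E :: "'i \<Rightarrow> ('h \<Rightarrow> 'h)"
    and \<Lambda> :: "'i set"
  assumes vN: "von_neumann_algebra M"
    and A_in: "A \<in> M" and B_in: "B \<in> M"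
    and A_sa: "self_adjoint A" and B_sa: "self_adjoint B"
    and E_proj: "\<And>j. j \<in> \<Lambda> \<Longrightarrow> is_projection (E j) \<and> E j \<in> Wstar A"
    and E_sum: "\<And>x. ((\<lambda>j. E j x) has_sum x) \<Lambda>"
    and E_cs: "\<And>j k. j \<in> \<Lambda> \<Longrightarrow> k \<in> \<Lambda> \<Longrightarrow> j \<noteq> k \<Longrightarrow>
        central_support M (E j \<circ> B \<circ> E k) = central_support M (E j) \<circ> central_support M (E k)"
    and E_irr: "\<And>j. j \<in> \<Lambda> \<Longrightarrow>
        irreducible_in (corner (E j) M) (E j \<circ> (\<lambda>x. A x + cscale \<i> (B x)) \<circ> E j)"
  shows "irreducible_in M (\<lambda>x. A x + cscale \<i> (B x))"
proof -
  have X_in: "(\<lambda>x. A x + cscale \<i> (B x)) \<in> M"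
    by (rule von_neumann_algebra_add_cscale[OF vN A_in B_in])
  have E_in: "E j \<in> M" if "j \<in> \<Lambda>" for j
    using E_proj[OF that] Wstar_least[OF vN A_in] by blast
  show ?thesis
  proof (rule irreducible_inI[OF vN X_in])
    fix T S assume T: "T \<in> commutant (Wstar (\<lambda>x. A x + cscale \<i> (B x)))" "T \<in> M" and S: "S \<in> M"
    note T_bop = von_neumann_algebra_bounded_op[OF vN T(2)]
    have TA: "T \<circ> A = A \<circ> T" and TB: "T \<circ> B = B \<circ> T"
      by (rule commutant_Wstar_cartesian[OF A_sa B_sa T(1)])+
    have TE: "T \<circ> E j = E j \<circ> T" if "j \<in> \<Lambda>" for j
      using commutant_Wstar_self_adjoint[OF A_sa T_bop TA] E_proj[OF that] by (blast dest: commutant_commute)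
    have diag: "E j \<circ> T \<circ> W \<circ> E j = E j \<circ> W \<circ> T \<circ> E j" if "j \<in> \<Lambda>" "W \<in> M" for j W
      using irreducible_corner_compression[OF vN _ E_in X_in T(2,1) TE E_irr] E_proj that by blast
    show "T \<circ> S = S \<circ> T"
    proof (rule bounded_op_eq_from_blocks[OF _ _ E_sum])
      fix j k assume jk: "j \<in> \<Lambda>" "k \<in> \<Lambda>"
      show "E j \<circ> (T \<circ> S) \<circ> E k = E j \<circ> (S \<circ> T) \<circ> E k"
        using diag[OF jk(1) S] offdiagonal_block_commute[OF vN S T(2) B_in E_in[OF jk(1)] E_in[OF jk(2)]
            TE[OF jk(1)] TE[OF jk(2)] TB diag[OF jk(1)] diag[OF jk(2)] E_cs[OF jk]]
        by (cases "j = k") (simp_all add: comp_assoc)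
    qed (use T_bop von_neumann_algebra_bounded_op[OF vN S] in \<open>simp_all add: bounded_op_compose\<close>)
  qed
qed

end
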